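(* Let $a\in\mathbb C\setminus\{0\}$ and $b\in\mathbb C$. Then (a) $\{\widehat{\mathcal B}(a,b)_n:n\ge0\}$ is a generating set of the algebra $\mathsf{NSym}$; (b) $\{\mathrm{comm}(\widehat{\mathcal B}(a,b)_n):n\ge0\}$ is a generating set of the algebra $\mathsf{Sym}$.
   Context: $\mathsf{NSym}$ is the algebra of noncommutative symmetric functions over $\mathbb C$ (free associative on $H_1,H_2,\dots$, with $H_\beta=H_{\beta_1}\cdots H_{\beta_l}$), $\mathsf{Sym}$ the algebra of symmetric functions, and $\mathrm{comm}:\mathsf{NSym}\to\mathsf{Sym}$ the algebra homomorphism with $H_n\mapsto h_n$ (complete homogeneous symmetric function). $\widehat{\mathcal B}(a,b)_0=1$ and for $n\ge1$, $\widehat{\mathcal B}(a,b)_n=\sum_{\beta}a^{n-\ell(\beta)}b^{\ell(\beta)-1}H_\beta$, the sum over all compositions $\beta$ of $n$, with the convention $0^0=1$ ($\ell(\beta)$ the number of parts). *)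

theory Defs
  imports Complex_Main "HOL-Library.Multiset"
begin

text \<open>NSym: the free associative C-algebra on H_1, H_2, ... . An element is a finitely
supported coefficient function on words; the word [b1,...,bl] (all bi >= 1, i.e. a
composition) stands for the basis element H_b1 * ... * H_bl; the empty word is 1.\<close>

type_synonym nsym = "nat list \<Rightarrow> complex"

definition nsym_carrier :: "nsym set" where
  "nsym_carrier = {f. finite {w. f w \<noteq> 0} \<and> (\<forall>w. f w \<noteq> 0 \<longrightarrow> 0 \<notin> set w)}"

definition nsym_one :: nsym where
  "nsym_one w = (if w = [] then 1 else 0)"

definition nsym_mult :: "nsym \<Rightarrow> nsym \<Rightarrow> nsym" where
  "nsym_mult f g w = (\<Sum>i\<le>length w. f (take i w) * g (drop i w))"

definition nsym_H :: "nat list \<Rightarrow> nsym" where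
  "nsym_H \<beta> w = (if w = \<beta> then 1 else 0)"

text \<open>Sym = C[h_1,h_2,...] (polynomial algebra on the algebraically independent h_n):
finitely supported coefficient functions on multisets of positive integers; the
multiset {#l1,...,lk#} stands for the monomial h_l1 * ... * h_lk.\<close>

type_synonym sym = "nat multiset \<Rightarrow> complex"

definition sym_carrier :: "sym set" where
  "sym_carrier = {f. finite {m. f m \<noteq> 0} \<and> (\<forall>m. f m \<noteq> 0 \<longrightarrow> 0 \<notin># m)}"

definition sym_one :: sym where
  "sym_one m = (if m = {#} then 1 else 0)"

definition sym_mult :: "sym \<Rightarrow> sym \<Rightarrow> sym" where
  "sym_mult f g m = (\<Sum>u\<in>{u. u \<subseteq># m}. f u * g (m - u))"

text \<open>comm : NSym -> Sym, the algebra homomorphism with H_n |-> h_n, i.e. H_beta |-> h_beta.\<close>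
definition comm :: "nsym \<Rightarrow> sym" where
  "comm f m = (\<Sum>w\<in>{w. mset w = m}. f w)"

inductive_set gen_subalg :: "('x \<Rightarrow> complex) set \<Rightarrow> (('x \<Rightarrow> complex) \<Rightarrow> ('x \<Rightarrow> complex) \<Rightarrow> ('x \<Rightarrow> complex))
    \<Rightarrow> ('x \<Rightarrow> complex) \<Rightarrow> ('x \<Rightarrow> complex) set"
  for S mult one where
  gen: "f \<in> S \<Longrightarrow> f \<in> gen_subalg S mult one"
| unit: "one \<in> gen_subalg S mult one"
| smult: "f \<in> gen_subalg S mult one \<Longrightarrow> (\<lambda>x. c * f x) \<in> gen_subalg S mult one"
| add: "f \<in> gen_subalg S mult one \<Longrightarrow> g \<in> gen_subalg S mult one \<Longrightarrow>
          (\<lambda>x. f x + g x) \<in> gen_subalg S mult one"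
| mult: "f \<in> gen_subalg S mult one \<Longrightarrow> g \<in> gen_subalg S mult one \<Longrightarrow>
          mult f g \<in> gen_subalg S mult one"

definition is_composition :: "nat \<Rightarrow> nat list \<Rightarrow> bool" where
  "is_composition n \<beta> \<longleftrightarrow> 0 \<notin> set \<beta> \<and> sum_list \<beta> = n"

text \<open>Bhat(a,b)_0 = 1, Bhat(a,b)_n = sum over compositions beta of n of
a^(n - l(beta)) b^(l(beta) - 1) H_beta  (Isabelle: 0^0 = 1).\<close>
definition Bhat :: "complex \<Rightarrow> complex \<Rightarrow> nat \<Rightarrow> nsym" where
  "Bhat a b n = (if n = 0 then nsym_one else
     (\<lambda>w. if is_composition n w then a ^ (n - length w) * b ^ (length w - 1) else 0))"

end

theory Submission
  imports Defs
begin

text \<open>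
  NSym has the basis of monomials H_beta, beta ranging over compositions, and Sym the basis of
  monomials h_lambda, lambda ranging over partitions. Bhat(a,b)_n is a^(n-1) H_n plus a
  combination of monomials H_beta all of whose parts are smaller than n, and comm turns this into
  the same unitriangularity for h_n. As a is nonzero, induction on n puts every H_n (resp. h_n)
  into the generated subalgebra, hence every monomial and, by linearity, every element. The
  reverse inclusions hold because the finitely supported functions on compositions (resp.
  partitions) are closed under the algebra operations.
\<close>

text \<open>delta beta is the monomial nsym_H beta of NSym, and delta m the monomial h_m of Sym.\<close>

definition delta :: "'x \<Rightarrow> 'x \<Rightarrow> complex" where
  "delta x = (\<lambda>y. if y = x then 1 else 0)"

definition finsupp_on :: "('x \<Rightarrow> bool) \<Rightarrow> ('x \<Rightarrow> complex) set" where
  "finsupp_on P = {f. finite {x. f x \<noteq> 0} \<and> (\<forall>x. f x \<noteq> 0 \<longrightarrow> P x)}"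

section \<open>Finitely supported functions\<close>

lemma finsupp_on_delta: "P x \<Longrightarrow> delta x \<in> finsupp_on P"
  by (simp add: finsupp_on_def delta_def)

lemma finsupp_on_smult:
  assumes "f \<in> finsupp_on P"
  shows "(\<lambda>x. c * f x) \<in> finsupp_on P"
proof -
  have "{x. c * f x \<noteq> 0} \<subseteq> {x. f x \<noteq> 0}"
    by auto
  with assms show ?thesis
    unfolding finsupp_on_def using finite_subset by auto
qed

lemma finsupp_on_add:
  assumes "f \<in> finsupp_on P" "g \<in> finsupp_on P"
  shows "(\<lambda>x. f x + g x) \<in> finsupp_on P"
proof -
  have "{x. f x + g x \<noteq> 0} \<subseteq> {x. f x \<noteq> 0} \<union> {x. g x \<noteq> 0}"
    by auto
  with assms show ?thesis
    unfolding finsupp_on_def using finite_subset by auto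
qed

lemma finsupp_on_convolution:
  fixes conc :: "'x \<Rightarrow> 'x \<Rightarrow> 'x"
  assumes f: "f \<in> finsupp_on P" and g: "g \<in> finsupp_on P"
    and split: "\<And>x. h x \<noteq> 0 \<Longrightarrow> \<exists>u v. x = conc u v \<and> f u \<noteq> 0 \<and> g v \<noteq> 0"
    and closed: "\<And>u v. P u \<Longrightarrow> P v \<Longrightarrow> P (conc u v)"
  shows "h \<in> finsupp_on P"
proof -
  let ?F = "{u. f u \<noteq> 0}" and ?G = "{v. g v \<noteq> 0}"
  have supp: "x \<in> case_prod conc ` (?F \<times> ?G)" if hx: "h x \<noteq> 0" for x
  proof -
    obtain u v where "x = conc u v" "f u \<noteq> 0" "g v \<noteq> 0"
      using split[OF hx] by blast
    then show ?thesis
      by force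
  qed
  have "finite (case_prod conc ` (?F \<times> ?G))"
    using f g by (simp add: finsupp_on_def)
  then have "finite {x. h x \<noteq> 0}"
    by (rule rev_finite_subset) (use supp in blast)
  moreover have "P x" if "h x \<noteq> 0" for x
    using supp[OF that] f g closed by (auto simp: finsupp_on_def)
  ultimately show ?thesis
    by (simp add: finsupp_on_def)
qed

lemma finsupp_eq_sum_delta:
  assumes "finite {x. f x \<noteq> 0}"
  shows "f = (\<lambda>y. \<Sum>x\<in>{x. f x \<noteq> 0}. f x * delta x y)"
proof
  fix y
  have "(\<Sum>x\<in>{x. f x \<noteq> 0}. f x * delta x y) = (\<Sum>x\<in>{x. f x \<noteq> 0}. if y = x then f x else 0)"
    by (rule sum.cong) (auto simp: delta_def)
  also have "\<dots> = f y"
    using assms by (simp add: sum.delta)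
  finally show "f y = (\<Sum>x\<in>{x. f x \<noteq> 0}. f x * delta x y)" ..
qed

section \<open>Generated subalgebras\<close>

lemma gen_subalg_subset:
  assumes "S \<subseteq> C" "one \<in> C"
    and "\<And>c f. f \<in> C \<Longrightarrow> (\<lambda>x. c * f x) \<in> C"
    and "\<And>f g. f \<in> C \<Longrightarrow> g \<in> C \<Longrightarrow> (\<lambda>x. f x + g x) \<in> C"
    and "\<And>f g. f \<in> C \<Longrightarrow> g \<in> C \<Longrightarrow> mul f g \<in> C"
  shows "gen_subalg S mul one \<subseteq> C"
proof
  fix f assume "f \<in> gen_subalg S mul one"
  then show "f \<in> C"
    by (induction rule: gen_subalg.induct) (use assms in blast)+
qed

lemma gen_subalg_subset_finsupp_on:
  assumes "S \<subseteq> finsupp_on P" "one = delta e" "P e"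
    and "\<And>f g. f \<in> finsupp_on P \<Longrightarrow> g \<in> finsupp_on P \<Longrightarrow> mul f g \<in> finsupp_on P"
  shows "gen_subalg S mul one \<subseteq> finsupp_on P"
proof (rule gen_subalg_subset)
  show "one \<in> finsupp_on P"
    using assms(2,3) by (simp add: finsupp_on_delta)
qed (use assms(1,4) finsupp_on_smult finsupp_on_add in blast)+

lemma gen_subalg_sum:
  assumes "finite I" "\<And>i. i \<in> I \<Longrightarrow> e i \<in> gen_subalg S mul one"
  shows "(\<lambda>x. \<Sum>i\<in>I. c i * e i x) \<in> gen_subalg S mul one"
  using assms
proof (induction I rule: finite_induct)
  case empty
  show ?case
    using gen_subalg.smult[OF gen_subalg.unit, where c = 0] by simp
next
  case (insert i I)
  then show ?case
    using gen_subalg.add[OF gen_subalg.smult[of "e i"] insert.IH] by simp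
qed

lemma finsupp_mem_gen_subalg:
  assumes "finite {x. f x \<noteq> 0}" "\<And>x. f x \<noteq> 0 \<Longrightarrow> delta x \<in> gen_subalg S mul one"
  shows "f \<in> gen_subalg S mul one"
  using gen_subalg_sum[of "{x. f x \<noteq> 0}" delta S mul one f] assms
  by (simp flip: finsupp_eq_sum_delta[OF assms(1)])

lemma delta_mem_gen_subalg_triangular:
  assumes f: "f \<in> gen_subalg S mul one" and fin: "finite {x. f x \<noteq> 0}" and lead: "f y \<noteq> 0"
    and lower: "\<And>x. f x \<noteq> 0 \<Longrightarrow> x \<noteq> y \<Longrightarrow> delta x \<in> gen_subalg S mul one"
  shows "delta y \<in> gen_subalg S mul one"
proof -
  define r where "r = (\<lambda>z. f z - f y * delta y z)"
  have r_supp: "f z \<noteq> 0 \<and> z \<noteq> y" if "r z \<noteq> 0" for z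
    using that by (cases "z = y") (auto simp: r_def delta_def)
  then have "{z. r z \<noteq> 0} \<subseteq> {x. f x \<noteq> 0}"
    by blast
  then have "finite {z. r z \<noteq> 0}"
    using fin by (rule finite_subset)
  then have "r \<in> gen_subalg S mul one"
    by (rule finsupp_mem_gen_subalg) (simp add: r_supp lower)
  then have "(\<lambda>z. 1 / f y * (f z + -1 * r z)) \<in> gen_subalg S mul one"
    using f by (intro gen_subalg.smult gen_subalg.add)
  moreover have "(\<lambda>z. 1 / f y * (f z + -1 * r z)) = delta y"
    using lead by (simp add: fun_eq_iff r_def)
  ultimately show ?thesis
    by simp
qed

lemma finsupp_on_subset_gen_subalg_unitriangular:
  fixes letter :: "nat \<Rightarrow> 'x" and parts :: "'x \<Rightarrow> nat set" and g :: "nat \<Rightarrow> 'x \<Rightarrow> complex"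
  assumes monomial: "\<And>x. (\<And>k. k \<in> parts x \<Longrightarrow> delta (letter k) \<in> gen_subalg S mul one) \<Longrightarrow>
      delta x \<in> gen_subalg S mul one"
    and gen: "\<And>n. 0 < n \<Longrightarrow> g n \<in> gen_subalg S mul one"
    and fin: "\<And>n. finite {x. g n x \<noteq> 0}"
    and lead: "\<And>n. 0 < n \<Longrightarrow> g n (letter n) \<noteq> 0"
    and lower: "\<And>n x k. 0 < n \<Longrightarrow> g n x \<noteq> 0 \<Longrightarrow> x \<noteq> letter n \<Longrightarrow> k \<in> parts x \<Longrightarrow> 0 < k \<and> k < n"
  shows "finsupp_on (\<lambda>x. 0 \<notin> parts x) \<subseteq> gen_subalg S mul one"
proof -
  have letters: "delta (letter n) \<in> gen_subalg S mul one" if "0 < n" for n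
    using that
  proof (induction n rule: less_induct)
    case (less n)
    show ?case
    proof (rule delta_mem_gen_subalg_triangular[OF gen[OF less.prems] fin lead[OF less.prems]])
      fix x assume "g n x \<noteq> 0" "x \<noteq> letter n"
      then show "delta x \<in> gen_subalg S mul one"
        using lower[OF less.prems] less.IH by (blast intro: monomial)
    qed
  qed
  show ?thesis
  proof
    fix f assume f: "f \<in> finsupp_on (\<lambda>x. 0 \<notin> parts x)"
    have "delta x \<in> gen_subalg S mul one" if "f x \<noteq> 0" for x
    proof (rule monomial)
      fix k assume "k \<in> parts x"
      with f that have "0 < k"
        unfolding finsupp_on_def by (blast intro: gr0I)
      then show "delta (letter k) \<in> gen_subalg S mul one"
        by (rule letters)
    qed
    moreover have "finite {x. f x \<noteq> 0}"
      using f by (simp add: finsupp_on_def)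
    ultimately show "f \<in> gen_subalg S mul one"
      by (blast intro: finsupp_mem_gen_subalg)
  qed
qed

section \<open>Compositions\<close>

lemma finite_compositions: "finite {\<beta>. is_composition n \<beta>}"
proof -
  have "length \<beta> \<le> sum_list \<beta>" if "0 \<notin> set \<beta>" for \<beta> :: "nat list"
    using that by (induction \<beta>) auto
  then have "{\<beta>. is_composition n \<beta>} \<subseteq> {\<beta>. set \<beta> \<subseteq> {0..n} \<and> length \<beta> \<le> n}"
    by (fastforce simp: is_composition_def intro: member_le_sum_list)
  then show ?thesis
    using finite_lists_length_le[of "{0..n}" n] by (rule finite_subset) simp
qed

lemma composition_parts_less:
  assumes "is_composition n \<beta>" "\<beta> \<noteq> [n]" "k \<in> set \<beta>"
  shows "0 < k \<and> k < n"
proof -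
  obtain xs ys where \<beta>: "\<beta> = xs @ k # ys"
    using split_list[OF assms(3)] by blast
  have sum: "sum_list xs + k + sum_list ys = n" and pos: "0 \<notin> set xs" "0 \<notin> set ys" "k \<noteq> 0"
    using assms(1) by (auto simp: \<beta> is_composition_def)
  have "k \<noteq> n"
  proof
    assume "k = n"
    with sum have "\<forall>x\<in>set xs. x = 0" "\<forall>x\<in>set ys. x = 0"
      by auto
    with pos have "set xs = {}" "set ys = {}"
      by (metis ex_in_conv)+
    with \<beta> \<open>k = n\<close> assms(2) show False
      by simp
  qed
  with sum pos show ?thesis
    by auto
qed

section \<open>Noncommutative symmetric functions\<close>

lemma nsym_carrier_eq_finsupp_on: "nsym_carrier = finsupp_on (\<lambda>w. 0 \<notin> set w)"
  by (simp add: nsym_carrier_def finsupp_on_def)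

lemma nsym_one_eq_delta: "nsym_one = delta []"
  by (simp add: fun_eq_iff nsym_one_def delta_def)

lemma nsym_mult_delta: "nsym_mult (delta u) (delta v) = delta (u @ v)"
proof
  fix w
  have "nsym_mult (delta u) (delta v) w = (\<Sum>i\<le>length w. if i = length u \<and> w = u @ v then 1 else 0)"
    unfolding nsym_mult_def
  proof (rule sum.cong)
    fix i assume "i \<in> {..length w}"
    then have "(take i w = u \<and> drop i w = v) \<longleftrightarrow> (i = length u \<and> w = u @ v)"
      by (auto simp: min_def)
    then show "delta u (take i w) * delta v (drop i w) = (if i = length u \<and> w = u @ v then 1 else 0)"
      by (auto simp: delta_def)
  qed simp
  also have "\<dots> = delta (u @ v) w"
    by (auto simp: delta_def)
  finally show "nsym_mult (delta u) (delta v) w = delta (u @ v) w" .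
qed

lemma nsym_mult_nonzero_split:
  assumes "nsym_mult f g w \<noteq> 0"
  shows "\<exists>u v. w = u @ v \<and> f u \<noteq> 0 \<and> g v \<noteq> 0"
proof -
  obtain i where "f (take i w) * g (drop i w) \<noteq> 0"
    using assms sum.not_neutral_contains_not_neutral unfolding nsym_mult_def by blast
  then show ?thesis
    by (metis append_take_drop_id mult_eq_0_iff)
qed

lemma nsym_mult_mem_nsym_carrier:
  "f \<in> nsym_carrier \<Longrightarrow> g \<in> nsym_carrier \<Longrightarrow> nsym_mult f g \<in> nsym_carrier"
  unfolding nsym_carrier_eq_finsupp_on
  by (rule finsupp_on_convolution[OF _ _ nsym_mult_nonzero_split]) auto

lemma delta_word_mem_gen_subalg:
  assumes "\<And>k. k \<in> set w \<Longrightarrow> delta [k] \<in> gen_subalg S nsym_mult nsym_one"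
  shows "delta w \<in> gen_subalg S nsym_mult nsym_one"
  using assms
proof (induction w)
  case Nil
  then show ?case
    by (simp flip: nsym_one_eq_delta add: gen_subalg.unit)
next
  case (Cons k w)
  then show ?case
    using gen_subalg.mult[of "delta [k]" S nsym_mult nsym_one "delta w"] by (simp add: nsym_mult_delta)
qed

lemma Bhat_single: "0 < n \<Longrightarrow> Bhat a b n [n] = a ^ (n - 1)"
  by (simp add: Bhat_def is_composition_def)

lemma Bhat_nonzero_composition: "0 < n \<Longrightarrow> Bhat a b n w \<noteq> 0 \<Longrightarrow> is_composition n w"
  by (simp add: Bhat_def split: if_splits)

lemma Bhat_mem_nsym_carrier: "Bhat a b n \<in> nsym_carrier"
proof (cases "n = 0")
  case True
  then show ?thesis
    by (simp add: Bhat_def nsym_one_eq_delta nsym_carrier_eq_finsupp_on finsupp_on_delta)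
next
  case False
  then have "{w. Bhat a b n w \<noteq> 0} \<subseteq> {w. is_composition n w}"
    using Bhat_nonzero_composition by blast
  with finite_compositions[of n] False show ?thesis
    unfolding nsym_carrier_def using finite_subset by (fastforce simp: is_composition_def)
qed

lemma gen_subalg_Bhat_subset: "gen_subalg (range (Bhat a b)) nsym_mult nsym_one \<subseteq> nsym_carrier"
  unfolding nsym_carrier_eq_finsupp_on
  by (rule gen_subalg_subset_finsupp_on[OF _ nsym_one_eq_delta])
    (use Bhat_mem_nsym_carrier nsym_mult_mem_nsym_carrier in \<open>auto simp: nsym_carrier_eq_finsupp_on\<close>)

lemma nsym_carrier_subset_gen_subalg_Bhat:
  assumes "a \<noteq> 0"
  shows "nsym_carrier \<subseteq> gen_subalg (range (Bhat a b)) nsym_mult nsym_one"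
  unfolding nsym_carrier_eq_finsupp_on
proof (rule finsupp_on_subset_gen_subalg_unitriangular[where letter = "\<lambda>n. [n]" and g = "Bhat a b"])
  show "delta w \<in> gen_subalg (range (Bhat a b)) nsym_mult nsym_one"
    if "\<And>k. k \<in> set w \<Longrightarrow> delta [k] \<in> gen_subalg (range (Bhat a b)) nsym_mult nsym_one" for w
    using that by (rule delta_word_mem_gen_subalg)
  show "Bhat a b n \<in> gen_subalg (range (Bhat a b)) nsym_mult nsym_one" for n
    by (rule gen_subalg.gen) simp
  show "finite {w. Bhat a b n w \<noteq> 0}" for n
    using Bhat_mem_nsym_carrier by (simp add: nsym_carrier_def)
  show "Bhat a b n [n] \<noteq> 0" if "0 < n" for n
    using assms that by (simp add: Bhat_single)
  show "0 < k \<and> k < n" if "0 < n" "Bhat a b n w \<noteq> 0" "w \<noteq> [n]" "k \<in> set w" for n w k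
    using that composition_parts_less[OF Bhat_nonzero_composition] by blast
qed

section \<open>Symmetric functions\<close>

lemma sym_carrier_eq_finsupp_on: "sym_carrier = finsupp_on (\<lambda>m. 0 \<notin># m)"
  by (simp add: sym_carrier_def finsupp_on_def)

lemma sym_one_eq_delta: "sym_one = delta {#}"
  by (simp add: fun_eq_iff sym_one_def delta_def)

lemma finite_submultisets: "finite {u. u \<subseteq># m}"
proof -
  have "{u. u \<subseteq># m} \<subseteq> (\<Union>k\<le>size m. multisets_of_size (set_mset m) k)"
    by (auto simp: multisets_of_size_def dest: set_mset_mono size_mset_mono)
  then show ?thesis
    by (rule finite_subset) auto
qed

lemma sym_mult_delta: "sym_mult (delta u) (delta v) = delta (u + v)"
proof
  fix m
  have "sym_mult (delta u) (delta v) m = (\<Sum>u'\<in>{u'. u' \<subseteq># m}. if u' = u \<and> m = u + v then 1 else 0)"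
    unfolding sym_mult_def
  proof (rule sum.cong)
    fix u' assume "u' \<in> {u'. u' \<subseteq># m}"
    then have "(u' = u \<and> m - u' = v) \<longleftrightarrow> (u' = u \<and> m = u + v)"
      by (auto simp: subset_mset.add_diff_inverse)
    then show "delta u u' * delta v (m - u') = (if u' = u \<and> m = u + v then 1 else 0)"
      by (auto simp: delta_def)
  qed simp
  also have "\<dots> = delta (u + v) m"
    using finite_submultisets[of m] by (auto simp: delta_def)
  finally show "sym_mult (delta u) (delta v) m = delta (u + v) m" .
qed

lemma sym_mult_nonzero_split:
  assumes "sym_mult f g m \<noteq> 0"
  shows "\<exists>u v. m = u + v \<and> f u \<noteq> 0 \<and> g v \<noteq> 0"
proof -
  obtain u where "u \<subseteq># m" "f u * g (m - u) \<noteq> 0"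
    using assms sum.not_neutral_contains_not_neutral unfolding sym_mult_def by blast
  then show ?thesis
    by (metis mult_eq_0_iff subset_mset.add_diff_inverse)
qed

lemma sym_mult_mem_sym_carrier:
  "f \<in> sym_carrier \<Longrightarrow> g \<in> sym_carrier \<Longrightarrow> sym_mult f g \<in> sym_carrier"
  unfolding sym_carrier_eq_finsupp_on
  by (rule finsupp_on_convolution[OF _ _ sym_mult_nonzero_split]) auto

lemma delta_mset_mem_gen_subalg:
  assumes "\<And>k. k \<in># m \<Longrightarrow> delta {#k#} \<in> gen_subalg S sym_mult sym_one"
  shows "delta m \<in> gen_subalg S sym_mult sym_one"
  using assms
proof (induction m)
  case empty
  then show ?case
    by (simp flip: sym_one_eq_delta add: gen_subalg.unit)
next
  case (add k m)
  then show ?case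
    using gen_subalg.mult[of "delta {#k#}" S sym_mult sym_one "delta m"] by (simp add: sym_mult_delta)
qed

lemma comm_nonzero_obtain:
  assumes "comm f m \<noteq> 0"
  obtains w where "mset w = m" "f w \<noteq> 0"
  using assms sum.not_neutral_contains_not_neutral unfolding comm_def by blast

lemma comm_single: "comm f {#n#} = f [n]"
proof -
  have "{w. mset w = {#n#}} = {[n]}"
    by auto
  then show ?thesis
    by (simp add: comm_def)
qed

lemma comm_mem_sym_carrier:
  assumes "f \<in> nsym_carrier"
  shows "comm f \<in> sym_carrier"
proof -
  have supp: "m \<in> mset ` {w. f w \<noteq> 0}" if "comm f m \<noteq> 0" for m
    using that by (blast elim: comm_nonzero_obtain)
  have "finite (mset ` {w. f w \<noteq> 0})"
    using assms by (simp add: nsym_carrier_def)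
  then have "finite {m. comm f m \<noteq> 0}"
    by (rule rev_finite_subset) (use supp in blast)
  moreover have "0 \<notin># m" if "comm f m \<noteq> 0" for m
    using supp[OF that] assms by (auto simp: nsym_carrier_def)
  ultimately show ?thesis
    by (simp add: sym_carrier_def)
qed

lemma gen_subalg_comm_Bhat_subset:
  "gen_subalg (range (\<lambda>n. comm (Bhat a b n))) sym_mult sym_one \<subseteq> sym_carrier"
  unfolding sym_carrier_eq_finsupp_on
  by (rule gen_subalg_subset_finsupp_on[OF _ sym_one_eq_delta])
    (use comm_mem_sym_carrier[OF Bhat_mem_nsym_carrier] sym_mult_mem_sym_carrier
      in \<open>auto simp: sym_carrier_eq_finsupp_on\<close>)

lemma sym_carrier_subset_gen_subalg_comm_Bhat:
  assumes "a \<noteq> 0"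
  shows "sym_carrier \<subseteq> gen_subalg (range (\<lambda>n. comm (Bhat a b n))) sym_mult sym_one"
  unfolding sym_carrier_eq_finsupp_on
proof (rule finsupp_on_subset_gen_subalg_unitriangular[where letter = "\<lambda>n. {#n#}" and g = "\<lambda>n. comm (Bhat a b n)"])
  let ?G = "gen_subalg (range (\<lambda>n. comm (Bhat a b n))) sym_mult sym_one"
  show "delta m \<in> ?G" if "\<And>k. k \<in># m \<Longrightarrow> delta {#k#} \<in> ?G" for m
    using that by (rule delta_mset_mem_gen_subalg)
  show "comm (Bhat a b n) \<in> ?G" for n
    by (rule gen_subalg.gen) simp
  show "finite {m. comm (Bhat a b n) m \<noteq> 0}" for n
    using comm_mem_sym_carrier[OF Bhat_mem_nsym_carrier] by (simp add: sym_carrier_def)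
  show "comm (Bhat a b n) {#n#} \<noteq> 0" if "0 < n" for n
    using assms that by (simp add: comm_single Bhat_single)
  show "0 < k \<and> k < n" if n: "0 < n" and m: "comm (Bhat a b n) m \<noteq> 0" "m \<noteq> {#n#}" and k: "k \<in># m"
    for n m k
  proof -
    obtain w where "mset w = m" "Bhat a b n w \<noteq> 0"
      using m(1) by (rule comm_nonzero_obtain)
    with m(2) k show ?thesis
      using composition_parts_less[OF Bhat_nonzero_composition[OF n]] by auto
  qed
qed

theorem corollary4p11:
  fixes a b :: complex
  assumes "a \<noteq> 0"
  shows "gen_subalg (range (Bhat a b)) nsym_mult nsym_one = nsym_carrier
       \<and> gen_subalg (range (\<lambda>n. comm (Bhat a b n))) sym_mult sym_one = sym_carrier"
  using gen_subalg_Bhat_subset nsym_carrier_subset_gen_subalg_Bhat[OF assms]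
    gen_subalg_comm_Bhat_subset sym_carrier_subset_gen_subalg_comm_Bhat[OF assms]
  by blast

end
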